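(* Let $(\Omega,\mathcal F)$ be a measurable space with $\Sigma\neq\emptyset$, and let $v:\mathcal F\to\mathbb R$ be a non-decreasing continuous set function with $v(\emptyset)=0$. Then $\lim_{n\to\infty}v(A_n)=v(\bigcup_n A_n)$ for every sequence $A_1\subset A_2\subset\cdots$ in $\mathcal F$, and $\lim_{n\to\infty}v(A_n)=v(\bigcap_n A_n)$ for every sequence $A_1\supset A_2\supset\cdots$ in $\mathcal F$.
   Context: $\Sigma$ denotes the set of all classes $\mathcal I\subset\mathcal F$ that are chains (totally ordered by inclusion), contain $\emptyset$ and $\Omega$, and generate $\mathcal F$ as a $\sigma$-algebra. $v$ is non-decreasing if $v(A)\le v(B)$ for $A\subset B$. For $\mathcal I\in\Sigma$ let $\mathcal J$ be the algebra generated by $\mathcal I$, whose elements are the sets $\bigcup_{i=1}^n (C_i\cap D_i^c)$ with $C_1\supset D_1\supset\cdots\supset C_n\supset D_n$ in $\mathcal I$; define $\mu_{v,\mathcal I}$ on $\mathcal J$ by $\mu_{v,\mathcal I}(\bigcup_{i=1}^n (C_i\cap D_i^c))=\sum_{i=1}^n(v(C_i)-v(D_i))$. A non-decreasing $v$ is called continuous if for every $\mathcal I\in\Sigma$ the finitely additive $\mu_{v,\mathcal I}$ is $\sigma$-additive on $\mathcal J$. *)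

theory Defs
  imports "HOL-Analysis.Analysis"
begin

definition Sigma_chains :: "'a measure \<Rightarrow> 'a set set set" where
  "Sigma_chains M = {I. I \<subseteq> sets M
      \<and> (\<forall>A\<in>I. \<forall>B\<in>I. A \<subseteq> B \<or> B \<subseteq> A)
      \<and> {} \<in> I \<and> space M \<in> I
      \<and> sigma_sets (space M) I = sets M}"

definition chain_rep :: "'a set set \<Rightarrow> nat \<Rightarrow> (nat \<Rightarrow> 'a set) \<Rightarrow> (nat \<Rightarrow> 'a set) \<Rightarrow> bool" where
  "chain_rep I n C D \<longleftrightarrow>
     (\<forall>i<n. C i \<in> I \<and> D i \<in> I \<and> D i \<subseteq> C i) \<and>
     (\<forall>i. Suc i < n \<longrightarrow> C (Suc i) \<subseteq> D i)"

definition gen_alg :: "'a set set \<Rightarrow> 'a set set" where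
  "gen_alg I = {X. \<exists>n C D. chain_rep I n C D \<and> X = (\<Union>i<n. C i - D i)}"

definition mu_vI :: "('a set \<Rightarrow> real) \<Rightarrow> 'a set set \<Rightarrow> 'a set \<Rightarrow> real" where
  "mu_vI v I X = (SOME s. \<exists>n C D. chain_rep I n C D \<and> X = (\<Union>i<n. C i - D i)
                              \<and> s = (\<Sum>i<n. v (C i) - v (D i)))"

definition nondecreasing_sf :: "'a measure \<Rightarrow> ('a set \<Rightarrow> real) \<Rightarrow> bool" where
  "nondecreasing_sf M v \<longleftrightarrow> (\<forall>A\<in>sets M. \<forall>B\<in>sets M. A \<subseteq> B \<longrightarrow> v A \<le> v B)"

definition sigma_additive_on :: "'a set set \<Rightarrow> ('a set \<Rightarrow> real) \<Rightarrow> bool" where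
  "sigma_additive_on J \<mu> \<longleftrightarrow>
     (\<forall>A::nat \<Rightarrow> 'a set. range A \<subseteq> J \<longrightarrow> disjoint_family A \<longrightarrow> (\<Union>i. A i) \<in> J \<longrightarrow>
        (\<lambda>i. \<mu> (A i)) sums \<mu> (\<Union>i. A i))"

definition continuous_sf :: "'a measure \<Rightarrow> ('a set \<Rightarrow> real) \<Rightarrow> bool" where
  "continuous_sf M v \<longleftrightarrow> nondecreasing_sf M v \<and>
     (\<forall>I\<in>Sigma_chains M. sigma_additive_on (gen_alg I) (mu_vI v I))"

end

theory Submission
  imports Defs
begin

text \<open>
  Fix a chain \<open>I\<^sub>0\<close> in \<open>\<Sigma>\<close>. A monotone sequence \<open>A\<^sub>n\<close> cuts the space into countably
  many linearly ordered gaps \<open>h - l\<close>: \<open>A\<^sub>0\<close>, the differences \<open>A\<^sub>n\<^sub>+\<^sub>1 - A\<^sub>n\<close> and the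
  complement of the limit (dually for decreasing sequences). Refining every gap by \<open>I\<^sub>0\<close>
  yields a chain \<open>I \<in> \<Sigma>\<close> that still generates the \<open>\<sigma>\<close>-algebra and contains all the \<open>A\<^sub>n\<close>
  and their limit. On intervals of \<open>I\<close> the set function \<open>\<mu>\<^sub>v\<^sub>,\<^sub>I\<close> is \<open>K' - K \<mapsto> v K' - v K\<close>,
  so its \<open>\<sigma>\<close>-additivity says that the telescoping series \<open>\<Sum> (v A\<^sub>n\<^sub>+\<^sub>1 - v A\<^sub>n)\<close> sums to
  \<open>v (\<Union> A\<^sub>n) - v A\<^sub>0\<close>.
\<close>

lemma chain_rep_shift:
  "chain_rep I (Suc n) C D \<Longrightarrow> chain_rep I n (\<lambda>i. C (Suc i)) (\<lambda>i. D (Suc i))"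
  unfolding chain_rep_def by auto

lemma chain_rep_tail_subset:
  assumes "chain_rep I n C D" "Suc i < n"
  shows "C (Suc i) \<subseteq> D 0"
  using assms(2)
proof (induction i)
  case 0
  then show ?case using assms(1) unfolding chain_rep_def by auto
next
  case (Suc i)
  then have "C (Suc i) \<subseteq> D 0" by simp
  moreover have "C (Suc (Suc i)) \<subseteq> D (Suc i)" "D (Suc i) \<subseteq> C (Suc i)"
    using assms(1) Suc.prems unfolding chain_rep_def by auto
  ultimately show ?case by blast
qed

lemma chain_interval_split:
  assumes "(C - D) \<union> R = K' - K" "R \<subseteq> D" "D \<subseteq> C" "C \<noteq> D"
    and "K \<subseteq> C \<or> C \<subseteq> K" "K' \<subseteq> D \<or> D \<subseteq> K'"
  shows "K' = C \<and> K \<subseteq> D \<and> R = D - K"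
  using assms by blast

text \<open>\<open>mu_vI\<close> picks an arbitrary representation, so all of them must give the same sum.\<close>

lemma chain_rep_sum_interval:
  fixes v :: "'a set \<Rightarrow> real"
  assumes "chain\<^sub>\<subseteq> I" "chain_rep I n C D" "K \<in> I" "K' \<in> I" "K \<subseteq> K'"
    and "(\<Union>i<n. C i - D i) = K' - K"
  shows "(\<Sum>i<n. v (C i) - v (D i)) = v K' - v K"
  using assms(2-)
proof (induction n arbitrary: C D K')
  case 0
  then show ?case by auto
next
  case (Suc n)
  define R where "R = (\<Union>i<n. C (Suc i) - D (Suc i))"
  have rep: "chain_rep I n (\<lambda>i. C (Suc i)) (\<lambda>i. D (Suc i))"
    using Suc.prems(1) by (rule chain_rep_shift)
  have CD: "C 0 \<in> I" "D 0 \<in> I" "D 0 \<subseteq> C 0"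
    using Suc.prems(1) unfolding chain_rep_def by auto
  have "R \<subseteq> D 0"
    unfolding R_def using chain_rep_tail_subset[OF Suc.prems(1)] by fastforce
  have split: "(C 0 - D 0) \<union> R = K' - K"
    using Suc.prems(5) unfolding R_def lessThan_Suc_eq_insert_0 by auto
  have sum: "(\<Sum>i<Suc n. v (C i) - v (D i)) = v (C 0) - v (D 0) + (\<Sum>i<n. v (C (Suc i)) - v (D (Suc i)))"
    by (rule sum.lessThan_Suc_shift)
  show ?case
  proof (cases "C 0 = D 0")
    case True
    then have "R = K' - K" using split by auto
    then show ?thesis
      using sum True Suc.IH[OF rep Suc.prems(2-4)] unfolding R_def by simp
  next
    case False
    have "K \<subseteq> C 0 \<or> C 0 \<subseteq> K" "K' \<subseteq> D 0 \<or> D 0 \<subseteq> K'"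
      using assms(1) CD Suc.prems(2,3) unfolding chain_subset_def by blast+
    then have "K' = C 0" "K \<subseteq> D 0" "R = D 0 - K"
      using chain_interval_split[OF split \<open>R \<subseteq> D 0\<close> CD(3) False] by auto
    then show ?thesis
      using sum Suc.IH[OF rep Suc.prems(2) CD(2)] unfolding R_def by simp
  qed
qed

lemma
  fixes v :: "'a set \<Rightarrow> real"
  assumes "chain\<^sub>\<subseteq> I" "K \<in> I" "K' \<in> I" "K \<subseteq> K'"
  shows mu_vI_interval: "mu_vI v I (K' - K) = v K' - v K"
    and interval_in_gen_alg: "K' - K \<in> gen_alg I"
proof -
  have rep: "chain_rep I 1 (\<lambda>_. K') (\<lambda>_. K)"
    using assms(2-4) unfolding chain_rep_def by auto
  then show "K' - K \<in> gen_alg I"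
    unfolding gen_alg_def by fastforce
  have "(\<exists>n C D. chain_rep I n C D \<and> K' - K = (\<Union>i<n. C i - D i) \<and> s = (\<Sum>i<n. v (C i) - v (D i)))
        \<longleftrightarrow> s = v K' - v K" for s
  proof
    assume "\<exists>n C D. chain_rep I n C D \<and> K' - K = (\<Union>i<n. C i - D i) \<and> s = (\<Sum>i<n. v (C i) - v (D i))"
    then show "s = v K' - v K"
      using chain_rep_sum_interval[OF assms(1) _ assms(2-4)] by metis
  next
    assume "s = v K' - v K"
    with rep have "chain_rep I 1 (\<lambda>_. K') (\<lambda>_. K) \<and> K' - K = (\<Union>i<(1::nat). K' - K)
        \<and> s = (\<Sum>i<(1::nat). v K' - v K)"
      by auto
    then show "\<exists>n C D. chain_rep I n C D \<and> K' - K = (\<Union>i<n. C i - D i) \<and> s = (\<Sum>i<n. v (C i) - v (D i))"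
      by fast
  qed
  then show "mu_vI v I (K' - K) = v K' - v K"
    unfolding mu_vI_def by simp
qed

text \<open>A pair \<open>(l, h) \<in> G\<close> stands for the gap \<open>h - l\<close>; the gaps are linearly ordered
  and tile the space.\<close>

locale gap_partition =
  fixes M :: "'a measure" and G :: "('a set \<times> 'a set) set"
  assumes countable_gaps: "countable G"
    and gap_lower_sets: "(l, h) \<in> G \<Longrightarrow> l \<in> sets M"
    and gap_upper_sets: "(l, h) \<in> G \<Longrightarrow> h \<in> sets M"
    and gap_lower_upper: "(l, h) \<in> G \<Longrightarrow> l \<subseteq> h"
    and gaps_ordered: "(l, h) \<in> G \<Longrightarrow> (l', h') \<in> G \<Longrightarrow> (l, h) = (l', h') \<or> h \<subseteq> l' \<or> h' \<subseteq> l"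
    and gaps_cover: "(\<Union>(l, h)\<in>G. h - l) = space M"
    and empty_gap_lower: "{} \<in> fst ` G"
    and space_gap_upper: "space M \<in> snd ` G"
begin

definition refinement :: "'a set set \<Rightarrow> 'a set set" where
  "refinement I = {l \<union> (C \<inter> h) | l h C. (l, h) \<in> G \<and> C \<in> I}"

lemma
  assumes "I \<in> Sigma_chains M" "(l, h) \<in> G"
  shows refinement_lower: "l \<in> refinement I"
    and refinement_upper: "h \<in> refinement I"
proof -
  have "{} \<in> I" "space M \<in> I"
    using assms(1) unfolding Sigma_chains_def by auto
  moreover have "l = l \<union> ({} \<inter> h)" "h = l \<union> (space M \<inter> h)"
    using gap_lower_upper[OF assms(2)] sets.sets_into_space[OF gap_upper_sets[OF assms(2)]] by auto
  ultimately show "l \<in> refinement I" "h \<in> refinement I"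
    unfolding refinement_def using assms(2) by blast+
qed

lemma Sigma_chains_refinement:
  assumes I: "I \<in> Sigma_chains M"
  shows "refinement I \<in> Sigma_chains M"
proof -
  define J where "J = refinement I"
  have I_sets: "I \<subseteq> sets M" and I_chain: "chain\<^sub>\<subseteq> I" and I_gen: "sigma_sets (space M) I = sets M"
    using I unfolding Sigma_chains_def chain_subset_def by auto
  have J_sets: "J \<subseteq> sets M"
    using I_sets gap_lower_sets gap_upper_sets unfolding J_def refinement_def by blast
  have "chain\<^sub>\<subseteq> J"
    unfolding chain_subset_def
  proof (intro ballI)
    fix X Y assume "X \<in> J" "Y \<in> J"
    then obtain l h C l' h' C' where X: "(l, h) \<in> G" "C \<in> I" "X = l \<union> (C \<inter> h)"
      and Y: "(l', h') \<in> G" "C' \<in> I" "Y = l' \<union> (C' \<inter> h')"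
      unfolding J_def refinement_def by blast
    then have "C \<subseteq> C' \<or> C' \<subseteq> C"
      using I_chain unfolding chain_subset_def by blast
    then show "X \<subseteq> Y \<or> Y \<subseteq> X"
      using gaps_ordered[OF X(1) Y(1)] gap_lower_upper[OF X(1)] gap_lower_upper[OF Y(1)] X(3) Y(3)
      by auto
  qed
  moreover have "{} \<in> J" "space M \<in> J"
    using empty_gap_lower space_gap_upper refinement_lower[OF I] refinement_upper[OF I]
    unfolding J_def by force+
  moreover have "sigma_sets (space M) J = sets M"
  proof
    show "sigma_sets (space M) J \<subseteq> sets M"
      using J_sets by (rule sets.sigma_sets_subset)
    interpret S: sigma_algebra "space M" "sigma_sets (space M) J"
      using J_sets sets.sets_into_space by (intro sigma_algebra_sigma_sets) auto
    have "C \<in> sigma_sets (space M) J" if "C \<in> I" for C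
    proof -
      have "l \<union> (C \<inter> h) - l \<in> sigma_sets (space M) J" if "(l, h) \<in> G" for l h
      proof (intro S.Diff sigma_sets.Basic)
        show "l \<union> (C \<inter> h) \<in> J"
          using \<open>C \<in> I\<close> that unfolding J_def refinement_def by blast
        show "l \<in> J"
          using refinement_lower[OF I that] unfolding J_def .
      qed
      then have "(\<Union>(l, h)\<in>G. l \<union> (C \<inter> h) - l) \<in> sigma_sets (space M) J"
        using countable_gaps by (intro S.countable_UN'') auto
      moreover have "(\<Union>(l, h)\<in>G. l \<union> (C \<inter> h) - l) = C \<inter> (\<Union>(l, h)\<in>G. h - l)"
        by auto
      moreover have "C \<subseteq> space M"
        using I_sets \<open>C \<in> I\<close> sets.sets_into_space by blast
      ultimately show ?thesis
        using gaps_cover by (simp add: Int_absorb2)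
    qed
    then have "sigma_sets (space M) I \<subseteq> sigma_sets (space M) J"
      by (intro sigma_sets_mono) auto
    then show "sets M \<subseteq> sigma_sets (space M) J"
      using I_gen by simp
  qed
  ultimately show ?thesis
    using J_sets unfolding J_def Sigma_chains_def chain_subset_def by blast
qed

lemma continuous_sf_gap_sums:
  fixes v :: "'a set \<Rightarrow> real"
  assumes "continuous_sf M v" "Sigma_chains M \<noteq> {}"
    and gaps: "\<And>i. (lo i, hi i) \<in> G"
    and a: "a \<in> fst ` G \<union> snd ` G" and b: "b \<in> fst ` G \<union> snd ` G" and "a \<subseteq> b"
    and disj: "disjoint_family (\<lambda>i. hi i - lo i)" and union: "(\<Union>i. hi i - lo i) = b - a"
  shows "(\<lambda>i. v (hi i) - v (lo i)) sums (v b - v a)"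
proof -
  obtain I0 where I0: "I0 \<in> Sigma_chains M"
    using assms(2) by blast
  define I where "I = refinement I0"
  have "I \<in> Sigma_chains M"
    unfolding I_def using I0 by (rule Sigma_chains_refinement)
  then have chain: "chain\<^sub>\<subseteq> I" and additive: "sigma_additive_on (gen_alg I) (mu_vI v I)"
    using assms(1) unfolding Sigma_chains_def continuous_sf_def chain_subset_def by auto
  have endpoints: "x \<in> I" if "x \<in> fst ` G \<union> snd ` G" for x
    using that refinement_lower[OF I0] refinement_upper[OF I0] unfolding I_def by force
  have lo_hi: "lo i \<in> I" "hi i \<in> I" "lo i \<subseteq> hi i" for i
    using endpoints gaps[of i] gap_lower_upper by force+
  have "range (\<lambda>i. hi i - lo i) \<subseteq> gen_alg I"
    using interval_in_gen_alg[OF chain] lo_hi by blast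
  moreover have "(\<Union>i. hi i - lo i) \<in> gen_alg I"
    unfolding union using chain endpoints[OF a] endpoints[OF b] \<open>a \<subseteq> b\<close> by (rule interval_in_gen_alg)
  ultimately have "(\<lambda>i. mu_vI v I (hi i - lo i)) sums mu_vI v I (\<Union>i. hi i - lo i)"
    using additive disj unfolding sigma_additive_on_def by blast
  then show ?thesis
    unfolding union using mu_vI_interval[OF chain] lo_hi endpoints[OF a] endpoints[OF b] \<open>a \<subseteq> b\<close>
    by simp
qed

end

lemma telescope_sums_LIMSEQ:
  fixes f :: "nat \<Rightarrow> 'a::real_normed_vector"
  assumes "(\<lambda>n. f (Suc n) - f n) sums s"
  shows "f \<longlonglongrightarrow> f 0 + s"
proof -
  have "(\<lambda>n. f 0 + (f n - f 0)) \<longlonglongrightarrow> f 0 + s"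
    using assms unfolding sums_def sum_lessThan_telescope tendsto_add_const_iff .
  then show ?thesis by simp
qed

lemma telescope_sums_LIMSEQ':
  fixes f :: "nat \<Rightarrow> 'a::real_normed_vector"
  assumes "(\<lambda>n. f n - f (Suc n)) sums s"
  shows "f \<longlonglongrightarrow> f 0 - s"
  using tendsto_minus[OF telescope_sums_LIMSEQ[of "\<lambda>n. - f n" s]] assms by simp

lemma UN_Suc_diff_incseq:
  assumes "incseq A"
  shows "(\<Union>i. A (Suc i) - A i) = (\<Union>i. A i) - A 0"
proof
  show "(\<Union>i. A (Suc i) - A i) \<subseteq> (\<Union>i. A i) - A 0"
    using assms unfolding incseq_def by blast
  have "x \<in> A n \<Longrightarrow> x \<notin> A 0 \<Longrightarrow> x \<in> (\<Union>i. A (Suc i) - A i)" for x n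
    by (induction n) auto
  then show "(\<Union>i. A i) - A 0 \<subseteq> (\<Union>i. A (Suc i) - A i)"
    by blast
qed

lemma UN_diff_Suc_decseq:
  assumes "decseq A"
  shows "(\<Union>i. A i - A (Suc i)) = A 0 - (\<Inter>i. A i)"
proof
  show "(\<Union>i. A i - A (Suc i)) \<subseteq> A 0 - (\<Inter>i. A i)"
    using assms unfolding decseq_def by blast
  have "x \<notin> A n \<Longrightarrow> x \<in> A 0 \<Longrightarrow> x \<in> (\<Union>i. A i - A (Suc i))" for x n
    by (induction n) auto
  then show "A 0 - (\<Inter>i. A i) \<subseteq> (\<Union>i. A i - A (Suc i))"
    by blast
qed

lemma gap_partition_incseq:
  assumes "range A \<subseteq> sets M" "incseq A"
  shows "gap_partition M (insert ({}, A 0) (insert (\<Union>i. A i, space M) (range (\<lambda>n. (A n, A (Suc n))))))"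
    (is "gap_partition M ?G")
proof
  have step: "A n \<subseteq> A (Suc n)" and le: "n \<le> m \<Longrightarrow> A n \<subseteq> A m" for n m
    using assms(2) unfolding incseq_def by auto
  have sets: "A n \<in> sets M" "(\<Union>i. A i) \<in> sets M" for n
    using assms(1) by auto
  then have space: "A n \<subseteq> space M" "(\<Union>i. A i) \<subseteq> space M" for n
    using sets.sets_into_space by blast+
  show "countable ?G" by simp
  show "l \<in> sets M" "h \<in> sets M" "l \<subseteq> h" if "(l, h) \<in> ?G" for l h
    using that sets step space by blast+
  show "(l, h) = (l', h') \<or> h \<subseteq> l' \<or> h' \<subseteq> l" if "(l, h) \<in> ?G" "(l', h') \<in> ?G" for l h l' h'
  proof -
    have "(A n, A (Suc n)) = (A m, A (Suc m)) \<or> A (Suc n) \<subseteq> A m \<or> A (Suc m) \<subseteq> A n" for n m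
      using le[of "Suc n" m] le[of "Suc m" n] by (cases n m rule: linorder_cases) auto
    moreover have "A n \<subseteq> (\<Union>i. A i)" for n
      by blast
    ultimately show ?thesis
      using that le[of 0] space by blast
  qed
  show "(\<Union>(l, h)\<in>?G. h - l) = space M"
    using UN_Suc_diff_incseq[OF assms(2)] space by auto
  show "{} \<in> fst ` ?G" "space M \<in> snd ` ?G"
    by force+
qed

lemma gap_partition_decseq:
  assumes "range B \<subseteq> sets M" "decseq B"
  shows "gap_partition M (insert ({}, \<Inter>i. B i) (insert (B 0, space M) (range (\<lambda>n. (B (Suc n), B n)))))"
    (is "gap_partition M ?G")
proof
  have step: "B (Suc n) \<subseteq> B n" and le: "n \<le> m \<Longrightarrow> B m \<subseteq> B n" for n m
    using assms(2) unfolding decseq_def by auto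
  have sets: "B n \<in> sets M" "(\<Inter>i. B i) \<in> sets M" for n
    using assms(1) by auto
  then have space: "B n \<subseteq> space M" "(\<Inter>i. B i) \<subseteq> space M" for n
    using sets.sets_into_space by blast+
  show "countable ?G" by simp
  show "l \<in> sets M" "h \<in> sets M" "l \<subseteq> h" if "(l, h) \<in> ?G" for l h
    using that sets step space by blast+
  show "(l, h) = (l', h') \<or> h \<subseteq> l' \<or> h' \<subseteq> l" if "(l, h) \<in> ?G" "(l', h') \<in> ?G" for l h l' h'
  proof -
    have "(B (Suc n), B n) = (B (Suc m), B m) \<or> B n \<subseteq> B (Suc m) \<or> B m \<subseteq> B (Suc n)" for n m
      using le[of "Suc n" m] le[of "Suc m" n] by (cases n m rule: linorder_cases) auto
    moreover have "(\<Inter>i. B i) \<subseteq> B n" for n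
      by blast
    ultimately show ?thesis
      using that le[of 0] space by blast
  qed
  show "(\<Union>(l, h)\<in>?G. h - l) = space M"
    using UN_diff_Suc_decseq[OF assms(2)] space by auto
  show "{} \<in> fst ` ?G" "space M \<in> snd ` ?G"
    by force+
qed

lemma continuous_sf_LIMSEQ_UN:
  fixes v :: "'a set \<Rightarrow> real"
  assumes "continuous_sf M v" "Sigma_chains M \<noteq> {}" "range A \<subseteq> sets M" "incseq A"
  shows "(\<lambda>n. v (A n)) \<longlonglongrightarrow> v (\<Union>n. A n)"
proof -
  interpret gap_partition M "insert ({}, A 0) (insert (\<Union>i. A i, space M) (range (\<lambda>n. (A n, A (Suc n)))))"
    using assms(3,4) by (rule gap_partition_incseq)
  have "(\<lambda>n. v (A (Suc n)) - v (A n)) sums (v (\<Union>n. A n) - v (A 0))"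
    using assms(4) by (intro continuous_sf_gap_sums[OF assms(1,2)])
      (force simp: disjoint_family_Suc incseq_SucD UN_Suc_diff_incseq)+
  then show ?thesis
    using telescope_sums_LIMSEQ by fastforce
qed

lemma continuous_sf_LIMSEQ_INT:
  fixes v :: "'a set \<Rightarrow> real"
  assumes "continuous_sf M v" "Sigma_chains M \<noteq> {}" "range B \<subseteq> sets M" "decseq B"
  shows "(\<lambda>n. v (B n)) \<longlonglongrightarrow> v (\<Inter>n. B n)"
proof -
  interpret gap_partition M "insert ({}, \<Inter>i. B i) (insert (B 0, space M) (range (\<lambda>n. (B (Suc n), B n))))"
    using assms(3,4) by (rule gap_partition_decseq)
  have "disjoint_family (\<lambda>n. B n - B (Suc n))"
    using disjoint_family_Suc[of "\<lambda>n. - B n"] assms(4) by (simp add: decseq_SucD Diff_eq Int_commute)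
  then have "(\<lambda>n. v (B n) - v (B (Suc n))) sums (v (B 0) - v (\<Inter>n. B n))"
    using assms(4) by (intro continuous_sf_gap_sums[OF assms(1,2)])
      (force simp: decseq_SucD UN_diff_Suc_decseq)+
  then show ?thesis
    using telescope_sums_LIMSEQ' by fastforce
qed

theorem proposition3:
  fixes M :: "'a measure" and v :: "'a set \<Rightarrow> real"
  assumes "Sigma_chains M \<noteq> {}"
    and "nondecreasing_sf M v"
    and "continuous_sf M v"
    and "v {} = 0"
  shows "(\<forall>A::nat \<Rightarrow> 'a set. range A \<subseteq> sets M \<longrightarrow> incseq A \<longrightarrow>
            (\<lambda>n. v (A n)) \<longlonglongrightarrow> v (\<Union>n. A n))
       \<and> (\<forall>A::nat \<Rightarrow> 'a set. range A \<subseteq> sets M \<longrightarrow> decseq A \<longrightarrow>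
            (\<lambda>n. v (A n)) \<longlonglongrightarrow> v (\<Inter>n. A n))"
  \<comment> \<open>Only differences \<open>v h - v l\<close> occur.\<close>
  using continuous_sf_LIMSEQ_UN[OF assms(3,1)] continuous_sf_LIMSEQ_INT[OF assms(3,1)] by blast

end
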